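(* For every positive integer $n$, $C_0(n)=\lfloor n/2\rfloor+1$.
   Context: Define on triples of integers $\Gamma_{0,1}(\tau_1,\tau_2,\tau_3)=(\tau_2,\tau_3,\tau_2+\tau_3)$ and $\Gamma_{0,2}(\tau_1,\tau_2,\tau_3)=(\tau_1,\tau_3,\tau_1+\tau_3)$. For an integer $\alpha\ge1$, the $(\alpha,0)$-Euclid tree is the set of triples obtained from the root $(\alpha,\alpha,2\alpha)$ by finitely many (possibly zero) applications of $\Gamma_{0,1},\Gamma_{0,2}$; $\max T$ is the largest entry of $T$. Define $C_0(n)=\#\{T: T\text{ is on the }(\alpha,0)\text{-Euclid tree for some integer }\alpha\ge1,\ \max T=n\}+1$ (distinct triples counted). *)

theory Defs
  imports Main
begin

type_synonym triple = "int \<times> int \<times> int"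

definition Gamma01 :: "triple \<Rightarrow> triple" where
  "Gamma01 t = (case t of (t1, t2, t3) \<Rightarrow> (t2, t3, t2 + t3))"

definition Gamma02 :: "triple \<Rightarrow> triple" where
  "Gamma02 t = (case t of (t1, t2, t3) \<Rightarrow> (t1, t3, t1 + t3))"

inductive_set euclid_tree0 :: "int \<Rightarrow> triple set" for \<alpha> :: int where
  root: "(\<alpha>, \<alpha>, 2 * \<alpha>) \<in> euclid_tree0 \<alpha>"
| g1: "T \<in> euclid_tree0 \<alpha> \<Longrightarrow> Gamma01 T \<in> euclid_tree0 \<alpha>"
| g2: "T \<in> euclid_tree0 \<alpha> \<Longrightarrow> Gamma02 T \<in> euclid_tree0 \<alpha>"

definition max_triple :: "triple \<Rightarrow> int" where
  "max_triple t = (case t of (a, b, c) \<Rightarrow> max a (max b c))"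

definition C0 :: "int \<Rightarrow> nat" where
  "C0 n = card {T. (\<exists>\<alpha>::int. \<alpha> \<ge> 1 \<and> T \<in> euclid_tree0 \<alpha>) \<and> max_triple T = n} + 1"

end

theory Submission
  imports Defs
begin

text \<open>Both maps send a triple (x, y, x + y) with 1 \<le> x \<le> y to one of the same shape,
  so every vertex of every tree has this form and its maximum is x + y. Conversely,
  subtracting the smaller entry from the larger one runs the Euclidean algorithm
  backwards and leads from (x, y, x + y) down to the root (g, g, 2g) with g = gcd x y.
  Hence the vertices with maximum n are exactly (x, n - x, n) for 1 \<le> x \<le> n div 2.\<close>

definition ordered_sum_triples :: "triple set" where
  "ordered_sum_triples = {(x, y, x + y) | x y. 1 \<le> x \<and> x \<le> y}"

lemma mem_ordered_sum_triples_iff: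
  "T \<in> ordered_sum_triples \<longleftrightarrow> (\<exists>x y. T = (x, y, x + y) \<and> 1 \<le> x \<and> x \<le> y)"
  unfolding ordered_sum_triples_def by blast

lemma euclid_tree0_subset_ordered_sum_triples:
  assumes "\<alpha> \<ge> 1"
  shows "euclid_tree0 \<alpha> \<subseteq> ordered_sum_triples"
proof
  fix T assume "T \<in> euclid_tree0 \<alpha>"
  then show "T \<in> ordered_sum_triples"
  proof (induction rule: euclid_tree0.induct)
    case root
    have "(\<alpha>, \<alpha>, 2 * \<alpha>) = (\<alpha>, \<alpha>, \<alpha> + \<alpha>)" by simp
    then show ?case using assms unfolding mem_ordered_sum_triples_iff by blast
  next
    case (g1 T)
    then obtain x y where "T = (x, y, x + y)" "1 \<le> x" "x \<le> y"
      unfolding mem_ordered_sum_triples_iff by blast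
    then have "Gamma01 T = (y, x + y, y + (x + y)) \<and> 1 \<le> y \<and> y \<le> x + y"
      by (simp add: Gamma01_def)
    then show ?case unfolding mem_ordered_sum_triples_iff by blast
  next
    case (g2 T)
    then obtain x y where "T = (x, y, x + y)" "1 \<le> x" "x \<le> y"
      unfolding mem_ordered_sum_triples_iff by blast
    then have "Gamma02 T = (x, x + y, x + (x + y)) \<and> 1 \<le> x \<and> x \<le> x + y"
      by (simp add: Gamma02_def)
    then show ?case unfolding mem_ordered_sum_triples_iff by blast
  qed
qed

lemma ordered_sum_triple_in_euclid_tree0:
  fixes x y :: int
  assumes "1 \<le> x" "x \<le> y"
  shows "\<exists>\<alpha>\<ge>1. (x, y, x + y) \<in> euclid_tree0 \<alpha>"
  using assms
proof (induction "nat (x + y)" arbitrary: x y rule: less_induct)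
  case less
  have IH: "\<exists>\<alpha>\<ge>1. (x', y', x' + y') \<in> euclid_tree0 \<alpha>"
    if "x' + y' < x + y" "1 \<le> x'" "x' \<le> y'" for x' y'
    using less.hyps[of x' y'] that by (simp add: nat_less_eq_zless)
  consider "x = y" | "x < y" "y - x \<le> x" | "x \<le> y - x"
    using less.prems by linarith
  then show ?case
  proof cases
    case 1
    then have "(x, y, x + y) = (x, x, 2 * x)" by simp
    then show ?thesis using euclid_tree0.root[of x] less.prems by auto
  next
    case 2
    then obtain \<alpha> where "\<alpha> \<ge> 1" "(y - x, x, (y - x) + x) \<in> euclid_tree0 \<alpha>"
      using IH[of "y - x" x] less.prems by auto
    moreover have "Gamma01 (y - x, x, (y - x) + x) = (x, y, x + y)"
      by (simp add: Gamma01_def)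
    ultimately show ?thesis using euclid_tree0.g1 by metis
  next
    case 3
    then obtain \<alpha> where "\<alpha> \<ge> 1" "(x, y - x, x + (y - x)) \<in> euclid_tree0 \<alpha>"
      using IH[of x "y - x"] less.prems by auto
    moreover have "Gamma02 (x, y - x, x + (y - x)) = (x, y, x + y)"
      by (simp add: Gamma02_def)
    ultimately show ?thesis using euclid_tree0.g2 by metis
  qed
qed

lemma Union_euclid_tree0_eq:
  "{T. \<exists>\<alpha>::int. \<alpha> \<ge> 1 \<and> T \<in> euclid_tree0 \<alpha>} = ordered_sum_triples"
  using euclid_tree0_subset_ordered_sum_triples ordered_sum_triple_in_euclid_tree0
  unfolding ordered_sum_triples_def by blast

lemma ordered_sum_triples_with_max:
  "{T \<in> ordered_sum_triples. max_triple T = n} = (\<lambda>x. (x, n - x, n)) ` {1..n div 2}"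
proof (intro set_eqI iffI)
  fix T assume "T \<in> {T \<in> ordered_sum_triples. max_triple T = n}"
  then obtain x y where "T = (x, y, x + y)" "1 \<le> x" "x \<le> y" "x + y = n"
    unfolding mem_ordered_sum_triples_iff max_triple_def by auto
  then show "T \<in> (\<lambda>x. (x, n - x, n)) ` {1..n div 2}"
    by (intro image_eqI[of _ _ x]) auto
next
  fix T assume "T \<in> (\<lambda>x. (x, n - x, n)) ` {1..n div 2}"
  then obtain x where "T = (x, n - x, n)" "1 \<le> x" "x \<le> n - x"
    by auto
  then show "T \<in> {T \<in> ordered_sum_triples. max_triple T = n}"
    unfolding mem_ordered_sum_triples_iff max_triple_def by auto
qed

theorem lemma3p4:
  fixes n :: int
  assumes "n \<ge> 1"
  shows "int (C0 n) = n div 2 + 1"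
proof -
  have "{T. (\<exists>\<alpha>::int. \<alpha> \<ge> 1 \<and> T \<in> euclid_tree0 \<alpha>) \<and> max_triple T = n}
      = (\<lambda>x. (x, n - x, n)) ` {1..n div 2}"
    using Union_euclid_tree0_eq ordered_sum_triples_with_max by blast
  moreover have "inj_on (\<lambda>x. (x, n - x, n)) {1..n div 2}"
    by (auto simp: inj_on_def)
  ultimately show ?thesis
    using assms by (simp add: C0_def card_image)
qed

end
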